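(* Let $q$ be a prime power, $k\ge 2$, $m,n$ positive integers, and let $\mathcal C$ be a nondegenerate $[n,k]_{q^m/q}$ code with generalized rank weights $(d_1,\ldots,d_k)$. Then $\mathcal C$ is minimal if and only if $d_2\ge m+1$.
   Context: An $[n,k]_{q^m/q}$ code is a $k$-dimensional $\mathbb F_{q^m}$-subspace of $\mathbb F_{q^m}^n$ endowed with the rank metric. For $v=(v_1,\ldots,v_n)\in\mathbb F_{q^m}^n$, its rank weight is $\dim_{\mathbb F_q}\langle v_1,\ldots,v_n\rangle_{\mathbb F_q}=r$; if $u=(u_1,\ldots,u_r)$ is an $\mathbb F_q$-basis of $\langle v_1,\ldots,v_n\rangle_{\mathbb F_q}$ and $v=uA$ with $A\in\mathbb F_q^{r\times n}$, the rank support of $v$ is $\mathrm{supp}(v)=$ the $\mathbb F_q$-row space of $A$ (independent of the choice of $u$). A nonzero codeword $v\in\mathcal C$ is minimal if for every $u\in\mathcal C$: $\mathrm{supp}(u)\subseteq\mathrm{supp}(v)$ iff $u=\lambda v$ for some $\lambda\in\mathbb F_{q^m}$; $\mathcal C$ is minimal if all its nonzero codewords are minimal. An $\mathbb F_{q^m}$-subspace $\mathcal A\subseteq\mathbb F_{q^m}^n$ is Galois closed if it is mapped to itself by the coordinatewise $q$-Frobenius map. The $j$-th generalized rank weight is $d_j=\min\{\dim_{\mathbb F_{q^m}}\mathcal A: \mathcal A \text{ Galois closed}, \dim_{\mathbb F_{q^m}}(\mathcal A\cap\mathcal C)\ge j\}$. $\mathcal C$ is nondegenerate if $d_k=n$.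 *)

theory Defs
  imports Main "HOL-Computational_Algebra.Primes"
begin

text \<open>Field F_{q^m} is a finite field type 'a with q^m elements; F_q is its subfield
  {x. x^q = x}. Vectors of F_{q^m}^n are functions nat => 'a vanishing outside {..<n}.\<close>

definition subfield_q :: "nat \<Rightarrow> ('a::{finite,field}) set" where
  "subfield_q q = {x. x ^ q = x}"

definition vecs :: "nat \<Rightarrow> (nat \<Rightarrow> 'a::field) set" where
  "vecs n = {v. \<forall>i\<ge>n. v i = 0}"

definition lcomb :: "'a::field list \<Rightarrow> (nat \<Rightarrow> 'a) list \<Rightarrow> (nat \<Rightarrow> 'a)" where
  "lcomb cs vs = (\<lambda>i. \<Sum>j<length vs. cs ! j * (vs ! j) i)"

definition vspan :: "'a::field set \<Rightarrow> (nat \<Rightarrow> 'a) set \<Rightarrow> (nat \<Rightarrow> 'a) set" where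
  "vspan K S = {v. \<exists>vs cs. set vs \<subseteq> S \<and> length cs = length vs \<and> set cs \<subseteq> K \<and> v = lcomb cs vs}"

definition lin_indep :: "'a::field set \<Rightarrow> (nat \<Rightarrow> 'a) list \<Rightarrow> bool" where
  "lin_indep K vs \<longleftrightarrow> (\<forall>cs. length cs = length vs \<and> set cs \<subseteq> K \<and> lcomb cs vs = (\<lambda>i. 0)
      \<longrightarrow> set cs \<subseteq> {0})"

definition vsubspace :: "'a::field set \<Rightarrow> (nat \<Rightarrow> 'a) set \<Rightarrow> bool" where
  "vsubspace K V \<longleftrightarrow> (\<lambda>i. 0) \<in> V \<and> (\<forall>u\<in>V. \<forall>w\<in>V. (\<lambda>i. u i + w i) \<in> V)
      \<and> (\<forall>c\<in>K. \<forall>u\<in>V. (\<lambda>i. c * u i) \<in> V)"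

definition vdim :: "'a::field set \<Rightarrow> (nat \<Rightarrow> 'a) set \<Rightarrow> nat" where
  "vdim K V = (LEAST d. \<exists>vs. length vs = d \<and> lin_indep K vs \<and> set vs \<subseteq> V \<and> vspan K (set vs) = V)"

definition sspan :: "'a::field set \<Rightarrow> 'a set \<Rightarrow> 'a set" where
  "sspan K S = {x. \<exists>us cs. set us \<subseteq> S \<and> length cs = length us \<and> set cs \<subseteq> K
      \<and> x = (\<Sum>j<length us. cs ! j * us ! j)}"

definition sindep :: "'a::field set \<Rightarrow> 'a list \<Rightarrow> bool" where
  "sindep K us \<longleftrightarrow> (\<forall>cs. length cs = length us \<and> set cs \<subseteq> K
      \<and> (\<Sum>j<length us. cs ! j * us ! j) = 0 \<longrightarrow> set cs \<subseteq> {0})"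

text \<open>(u, A) with u an F_q-basis of the span of the entries of v, A in F_q^{r x n}
  (rows indexed by i < r = length u, columns j < n), and v = u A.\<close>
definition supp_repr :: "'a::field set \<Rightarrow> nat \<Rightarrow> (nat \<Rightarrow> 'a) \<Rightarrow> 'a list \<Rightarrow> (nat \<Rightarrow> nat \<Rightarrow> 'a) \<Rightarrow> bool" where
  "supp_repr K n v u A \<longleftrightarrow> sindep K u \<and> sspan K (set u) = sspan K (v ` {..<n})
     \<and> (\<forall>i j. A i j \<in> K) \<and> (\<forall>i j. (i \<ge> length u \<or> j \<ge> n) \<longrightarrow> A i j = 0)
     \<and> (\<forall>j<n. v j = (\<Sum>i<length u. u ! i * A i j))"

definition rank_supp :: "'a::field set \<Rightarrow> nat \<Rightarrow> (nat \<Rightarrow> 'a) \<Rightarrow> (nat \<Rightarrow> 'a) set" where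
  "rank_supp K n v = (let (u, A) = (SOME p. supp_repr K n v (fst p) (snd p))
      in vspan K {(\<lambda>j. A i j) | i. i < length u})"

definition minimal_codeword :: "nat \<Rightarrow> nat \<Rightarrow> (nat \<Rightarrow> 'a::{finite,field}) set \<Rightarrow> (nat \<Rightarrow> 'a) \<Rightarrow> bool" where
  "minimal_codeword q n C v \<longleftrightarrow> v \<in> C \<and> v \<noteq> (\<lambda>i. 0) \<and>
     (\<forall>u\<in>C. rank_supp (subfield_q q) n u \<subseteq> rank_supp (subfield_q q) n v
        \<longleftrightarrow> (\<exists>c. u = (\<lambda>i. c * v i)))"

definition minimal_code :: "nat \<Rightarrow> nat \<Rightarrow> (nat \<Rightarrow> 'a::{finite,field}) set \<Rightarrow> bool" where
  "minimal_code q n C \<longleftrightarrow> (\<forall>v\<in>C. v \<noteq> (\<lambda>i. 0) \<longrightarrow> minimal_codeword q n C v)"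

definition galois_closed :: "nat \<Rightarrow> (nat \<Rightarrow> 'a::field) set \<Rightarrow> bool" where
  "galois_closed q A \<longleftrightarrow> (\<forall>v\<in>A. (\<lambda>i. v i ^ q) \<in> A)"

definition gen_rank_weight :: "nat \<Rightarrow> nat \<Rightarrow> (nat \<Rightarrow> 'a::{finite,field}) set \<Rightarrow> nat \<Rightarrow> nat" where
  "gen_rank_weight q n C j = (LEAST d. \<exists>A. vsubspace UNIV A \<and> A \<subseteq> vecs n \<and> galois_closed q A
      \<and> vdim UNIV (A \<inter> C) \<ge> j \<and> vdim UNIV A = d)"

definition is_code :: "nat \<Rightarrow> nat \<Rightarrow> (nat \<Rightarrow> 'a::field) set \<Rightarrow> bool" where
  "is_code n k C \<longleftrightarrow> vsubspace UNIV C \<and> C \<subseteq> vecs n \<and> vdim UNIV C = k"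

definition nondegenerate :: "nat \<Rightarrow> nat \<Rightarrow> nat \<Rightarrow> (nat \<Rightarrow> 'a::{finite,field}) set \<Rightarrow> bool" where
  "nondegenerate q n k C \<longleftrightarrow> gen_rank_weight q n C k = n"

end

(*
  If d_2 <= m, pick a Galois-closed A with dim A <= m and dim (A \<inter> C) >= 2. Such an A has a
  basis of t <= m vectors with entries in F_q, so for independent v, w in A \<inter> C the pairs
  (v.y, w.y), y in F_q^n, take at most q^t <= q^m values. Of the q^m + 1 lines through the
  origin of F_{q^m}^2, some line a X + b Y = 0 therefore contains none of these pairs except
  (0, 0), and every F_q-vector orthogonal to c = a v + b w is orthogonal to v and to w. Since
  the rank support of x is the orthogonal complement in F_q^n of the F_q-vectors orthogonal
  to x, both supp v and supp w lie in supp c, so c is not minimal.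

  Conversely, if supp u is contained in supp v for independent codewords u, v, then the
  F_{q^m}-span of supp v is Galois-closed, has dimension rk v <= m, and contains u and v,
  so d_2 <= m.
*)
theory Submission
  imports Defs "HOL-Computational_Algebra.Polynomial" "HOL-Number_Theory.Residues"
begin

section \<open>The subfield \<open>F\<^sub>q\<close> of a finite field\<close>

lemma CHAR_eq_of_card_prime_power:
  assumes "prime p" and "card (UNIV :: 'a::{finite,field} set) = p ^ N"
  shows "CHAR('a) = p"
proof -
  have "prime CHAR('a)"
    using prime_CHAR_semidom finite_imp_CHAR_pos[where ?'a='a] by auto
  moreover have "CHAR('a) dvd p ^ N"
    using CHAR_dvd_CARD[where ?'a='a] assms(2) by simp
  ultimately show ?thesis
    using assms(1) prime_dvd_power primes_dvd_imp_eq by blast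
qed

lemma prime_power_field_order:
  assumes "prime p" and "e > 0" and "q = p ^ e" and "card (UNIV :: 'a::{finite,field} set) = q ^ m"
  shows "prime CHAR('a)" and "q = CHAR('a) ^ e" and "q \<ge> 2"
proof -
  have "CHAR('a) = p"
    using CHAR_eq_of_card_prime_power[of p "e * m"] assms by (simp add: power_mult)
  then show "prime CHAR('a)" and "q = CHAR('a) ^ e"
    using assms(1,3) by simp_all
  have "p ^ 1 \<le> p ^ e"
    using assms(2) prime_gt_0_nat[OF assms(1)] by (intro power_increasing) simp_all
  then show "q \<ge> 2"
    using assms(3) prime_ge_2_nat[OF assms(1)] by simp
qed

lemma power_card_eq_self: "(x::'a::{finite,field}) ^ card (UNIV :: 'a set) = x"
proof (cases "x = 0")
  case False
  define U where "U = UNIV - {0::'a}"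
  have "(\<Prod>y\<in>U. y) = (\<Prod>y\<in>U. x * y)"
    unfolding U_def
    by (rule prod.reindex_bij_witness[of _ "\<lambda>y. x * y" "\<lambda>y. y / x"]) (simp_all add: False)
  also have "\<dots> = x ^ card U * (\<Prod>y\<in>U. y)"
    by (simp add: prod.distrib)
  finally have "x ^ card U = 1"
    unfolding U_def by simp
  moreover have "card (UNIV :: 'a set) = Suc (card U)"
    unfolding U_def using card_Suc_Diff1[of UNIV "0::'a"] by simp
  ultimately show ?thesis
    by (metis power_Suc mult_1_right)
qed (simp add: zero_power finite_UNIV_card_ge_0)

lemma nat_geometric_sum: "(q - 1) * (\<Sum>i<m. q ^ i) = q ^ m - (1::nat)"
proof (cases "q = 0")
  case True
  then show ?thesis
    by (cases m) (simp_all add: lessThan_Suc)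
next
  case False
  then have "int ((q - 1) * (\<Sum>i<m. q ^ i)) = int (q ^ m - 1)"
    by (simp add: of_nat_diff power_diff_1_eq)
  then show ?thesis
    by linarith
qed

lemma card_subfield_q_le:
  assumes "q \<ge> 2"
  shows "card (subfield_q q :: 'a::{finite,field} set) \<le> q"
proof -
  define P :: "'a poly" where "P = Polynomial.monom 1 q + Polynomial.monom (-1) 1"
  have "degree P = q"
    unfolding P_def using assms by (subst degree_add_eq_left) (simp_all add: degree_monom_eq)
  then have "P \<noteq> 0"
    using assms by auto
  have "subfield_q q = {x::'a. poly P x = 0}"
    unfolding subfield_q_def P_def by (simp add: poly_monom)
  then show ?thesis
    using card_poly_roots_bound[OF \<open>P \<noteq> 0\<close>] \<open>degree P = q\<close> by simp
qed

lemma geometric_sum_vanishes_off_subfield_q: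
  assumes "q \<ge> 2" and "card (UNIV :: 'a::{finite,field} set) = q ^ m"
    and "(q - 1) * L = q ^ m - 1" and "x \<notin> subfield_q q"
  shows "(\<Sum>i<L. (x ^ (q - 1)) ^ i) = (0::'a)"
proof -
  define y where "y = x ^ (q - 1)"
  have "x ^ q = x * y"
    unfolding y_def using assms(1) by (metis Suc_diff_1 less_le_trans pos2 power_Suc)
  then have "x \<noteq> 0" and "y \<noteq> 1"
    using assms(4) unfolding subfield_q_def by auto
  have "q ^ m > 0"
    using assms(1) by simp
  then have "x * y ^ L = x"
    using power_card_eq_self[of x] assms(2,3) unfolding y_def
    by (metis (no_types) Suc_diff_1 power_Suc power_mult)
  then have "y ^ L - 1 = 0"
    using \<open>x \<noteq> 0\<close> by simp
  then have "(y - 1) * (\<Sum>i<L. y ^ i) = 0"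
    by (simp add: power_diff_1_eq)
  then show ?thesis
    using \<open>y \<noteq> 1\<close> unfolding y_def by simp
qed

lemma card_not_subfield_q_le:
  assumes "q \<ge> 2" and "card (UNIV :: 'a::{finite,field} set) = q ^ m" and "m > 0"
  shows "card (UNIV - subfield_q q :: 'a set) \<le> q ^ m - q"
proof -
  define N where "N = q ^ m"
  define L where "L = (\<Sum>i<m. q ^ i)"
  have "q ^ 1 \<le> q ^ m"
    using assms by (intro power_increasing) auto
  then have "q \<le> N"
    by (simp add: N_def)
  have "L \<ge> 1"
    unfolding L_def using member_le_sum[of 0 "{..<m}" "\<lambda>i. q ^ i"] assms(3) by simp
  have L: "(q - 1) * L = N - 1"
    unfolding N_def L_def by (rule nat_geometric_sum)
  \<comment> \<open>\<open>poly G x = (x ^ (N - 1) - 1) / (x ^ (q - 1) - 1)\<close>, which vanishes outside \<open>F\<^sub>q\<close>\<close>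
  define G :: "'a poly" where "G = (\<Sum>i<L. Polynomial.monom 1 ((q - 1) * i))"
  have poly_G: "poly G x = (\<Sum>i<L. (x ^ (q - 1)) ^ i)" for x
    unfolding G_def poly_sum by (simp add: poly_monom power_mult)
  have "poly G 0 = 1"
    unfolding poly_G using \<open>L \<ge> 1\<close> assms(1)
    by (simp add: zero_power power_0_left sum.If_cases lessThan_def Collect_conj_eq)
  then have "G \<noteq> 0"
    by auto
  have "degree G \<le> (q - 1) * (L - 1)"
    unfolding G_def by (rule degree_sum_le) (auto intro!: order.trans[OF degree_monom_le])
  also have "\<dots> = N - q"
    using L \<open>q \<le> N\<close> assms(1) by (simp add: diff_mult_distrib2)
  finally have "degree G \<le> N - q" .
  have "poly G x = 0" if "x \<notin> subfield_q q" for x :: 'a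
    unfolding poly_G
    using geometric_sum_vanishes_off_subfield_q[OF assms(1,2) L[unfolded N_def] that] .
  then have "card (UNIV - subfield_q q :: 'a set) \<le> card {x::'a. poly G x = 0}"
    by (intro card_mono) auto
  also have "\<dots> \<le> N - q"
    using card_poly_roots_bound[OF \<open>G \<noteq> 0\<close>] \<open>degree G \<le> N - q\<close> by simp
  finally show ?thesis
    unfolding N_def .
qed

lemma card_subfield_q:
  assumes "q \<ge> 2" and "card (UNIV :: 'a::{finite,field} set) = q ^ m" and "m > 0"
  shows "card (subfield_q q :: 'a set) = q"
proof -
  have "q ^ 1 \<le> q ^ m"
    using assms by (intro power_increasing) auto
  moreover have "card (UNIV - subfield_q q :: 'a set) = q ^ m - card (subfield_q q :: 'a set)"
    using assms(2) by (simp add: card_Diff_subset)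
  ultimately show ?thesis
    using card_subfield_q_le[OF assms(1), where ?'a = 'a] card_not_subfield_q_le[OF assms] by simp
qed

definition is_subfield :: "'a::field set \<Rightarrow> bool" where
  "is_subfield K \<longleftrightarrow> 0 \<in> K \<and> 1 \<in> K \<and> (\<forall>x\<in>K. \<forall>y\<in>K. x + y \<in> K \<and> x * y \<in> K)
     \<and> (\<forall>x\<in>K. - x \<in> K \<and> inverse x \<in> K)"

lemma is_subfieldD:
  assumes "is_subfield K"
  shows "0 \<in> K" and "1 \<in> K"
    and "x \<in> K \<Longrightarrow> y \<in> K \<Longrightarrow> x + y \<in> K" and "x \<in> K \<Longrightarrow> y \<in> K \<Longrightarrow> x * y \<in> K"
    and "x \<in> K \<Longrightarrow> - x \<in> K" and "x \<in> K \<Longrightarrow> inverse x \<in> K"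
    and "x \<in> K \<Longrightarrow> y \<in> K \<Longrightarrow> x - y \<in> K" and "x \<in> K \<Longrightarrow> y \<in> K \<Longrightarrow> x / y \<in> K"
  using assms unfolding is_subfield_def diff_conv_add_uminus divide_inverse by blast+

lemma is_subfield_sum:
  assumes "is_subfield K" and "\<And>i. i \<in> A \<Longrightarrow> f i \<in> K"
  shows "sum f A \<in> K"
  using assms(2)
  by (induction A rule: infinite_finite_induct) (simp_all add: is_subfieldD[OF assms(1)])

lemma is_subfield_subfield_q:
  assumes "prime CHAR('a::{finite,field})" and "q = CHAR('a) ^ e"
  shows "is_subfield (subfield_q q :: 'a set)"
proof -
  have frob_add: "(x + y) ^ q = x ^ q + y ^ q" for x y :: 'a
    using freshmans_dream'[OF assms] .
  have "q > 0"
    using assms prime_gt_0_nat by simp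
  have frob_uminus: "(- x) ^ q = - (x ^ q)" for x :: 'a
    using frob_add[of "- x" x] \<open>q > 0\<close> by (simp add: zero_power eq_neg_iff_add_eq_0)
  show ?thesis
    unfolding is_subfield_def subfield_q_def
    using \<open>q > 0\<close> frob_add frob_uminus by (simp add: zero_power power_mult_distrib power_inverse)
qed

section \<open>Linear combinations and spans of vectors\<close>

lemma lcomb_Nil [simp]: "lcomb cs [] = (\<lambda>i. 0)"
  unfolding lcomb_def by simp

lemma lcomb_Cons [simp]: "lcomb (c # cs) (w # ws) = (\<lambda>i. c * w i + lcomb cs ws i)"
  unfolding lcomb_def length_Cons sum.lessThan_Suc_shift by simp

lemma lcomb_scale:
  "length cs = length ws \<Longrightarrow> lcomb (map (\<lambda>x. c * x) cs) ws = (\<lambda>i. c * lcomb cs ws i)"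
  unfolding lcomb_def by (auto simp: sum_distrib_left mult.assoc intro!: sum.cong)

lemma lcomb_add:
  "length cs = length ws \<Longrightarrow> length ds = length ws \<Longrightarrow>
   lcomb (map2 (+) cs ds) ws = (\<lambda>i. lcomb cs ws i + lcomb ds ws i)"
  unfolding lcomb_def by (auto simp: sum.distrib algebra_simps intro!: sum.cong)

lemma lcomb_diff:
  "length cs = length ws \<Longrightarrow> length ds = length ws \<Longrightarrow>
   lcomb (map2 (-) cs ds) ws = (\<lambda>i. lcomb cs ws i - lcomb ds ws i)"
  unfolding lcomb_def by (auto simp: sum_subtractf algebra_simps intro!: sum.cong)

lemma lcomb_replicate_0: "lcomb (replicate (length ws) 0) ws = (\<lambda>i. 0)"
  unfolding lcomb_def by simp

lemma lcomb_in_vsubspace: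
  assumes "vsubspace K T" and "set ws \<subseteq> T" and "set cs \<subseteq> K" and "length cs = length ws"
  shows "lcomb cs ws \<in> T"
  using assms(2-4)
proof (induction ws arbitrary: cs)
  case Nil
  then show ?case
    using assms(1) unfolding vsubspace_def by simp
next
  case (Cons w ws)
  then obtain c cs' where "cs = c # cs'" and "length cs' = length ws"
    by (cases cs) auto
  with Cons assms(1) show ?case
    unfolding vsubspace_def by simp
qed

lemma vspan_subset: "vsubspace K T \<Longrightarrow> S \<subseteq> T \<Longrightarrow> vspan K S \<subseteq> T"
  unfolding vspan_def using lcomb_in_vsubspace by blast

lemma in_vspan: "1 \<in> K \<Longrightarrow> v \<in> S \<Longrightarrow> v \<in> vspan K S"
  unfolding vspan_def by (intro CollectI exI[of _ "[v]"] exI[of _ "[1]"]) (simp add: lcomb_def)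

definition span_list :: "(nat \<Rightarrow> 'a::field) list \<Rightarrow> (nat \<Rightarrow> 'a) set" where
  "span_list ws = {lcomb cs ws | cs. length cs = length ws}"

lemma span_listI: "length cs = length ws \<Longrightarrow> lcomb cs ws \<in> span_list ws"
  unfolding span_list_def by auto

lemma span_listE:
  assumes "x \<in> span_list ws"
  obtains cs where "length cs = length ws" and "x = lcomb cs ws"
  using assms unfolding span_list_def by auto

lemma span_list_Cons:
  assumes "y \<in> span_list ws"
  shows "(\<lambda>i. c * w i + y i) \<in> span_list (w # ws)"
proof -
  obtain cs where "length cs = length ws" and "y = lcomb cs ws"
    using assms by (rule span_listE)
  then show ?thesis
    using span_listI[of "c # cs" "w # ws"] by simp
qed

lemma vsubspace_span_list: "vsubspace UNIV (span_list ws)"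
  unfolding vsubspace_def
proof (intro conjI ballI)
  show "(\<lambda>i. 0) \<in> span_list ws"
    using span_listI[of "replicate (length ws) 0" ws]
    by (simp only: lcomb_replicate_0 length_replicate)
next
  fix u w
  assume "u \<in> span_list ws" and "w \<in> span_list ws"
  then obtain cs ds where "length cs = length ws" "u = lcomb cs ws"
    and "length ds = length ws" "w = lcomb ds ws"
    by (meson span_listE)
  then show "(\<lambda>i. u i + w i) \<in> span_list ws"
    using span_listI[of "map2 (+) cs ds" ws] by (simp add: lcomb_add)
next
  fix c :: 'a and u
  assume "u \<in> span_list ws"
  then obtain cs where "length cs = length ws" "u = lcomb cs ws"
    by (rule span_listE)
  then show "(\<lambda>i. c * u i) \<in> span_list ws"
    using span_listI[of "map (\<lambda>x. c * x) cs" ws] by (simp add: lcomb_scale)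
qed

lemma set_subset_span_list: "set ws \<subseteq> span_list ws"
proof
  fix w
  assume "w \<in> set ws"
  then obtain k where k: "k < length ws" and "w = ws ! k"
    by (auto simp: in_set_conv_nth)
  define cs :: "'a list" where "cs = map (\<lambda>j. if j = k then 1 else 0) [0..<length ws]"
  have "lcomb cs ws = w"
  proof
    fix i
    have "lcomb cs ws i = (\<Sum>j<length ws. if j = k then (ws ! j) i else 0)"
      unfolding lcomb_def cs_def by (intro sum.cong) auto
    then show "lcomb cs ws i = w i"
      using k \<open>w = ws ! k\<close> by simp
  qed
  then show "w \<in> span_list ws"
    using span_listI[of cs ws] by (simp add: cs_def)
qed

lemma span_list_subset: "vsubspace UNIV T \<Longrightarrow> set ws \<subseteq> T \<Longrightarrow> span_list ws \<subseteq> T"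
  by (auto elim!: span_listE intro: lcomb_in_vsubspace[where K = UNIV])

lemma span_list_eq_vspan: "span_list ws = vspan UNIV (set ws)"
proof
  show "span_list ws \<subseteq> vspan UNIV (set ws)"
    unfolding vspan_def by (auto elim!: span_listE)
  show "vspan UNIV (set ws) \<subseteq> span_list ws"
    by (rule vspan_subset[OF vsubspace_span_list set_subset_span_list])
qed

lemma list_eq_if_map2_diff_zero:
  assumes "length cs = length ds" and "set (map2 (-) cs ds) \<subseteq> {0::'a::ab_group_add}"
  shows "cs = ds"
proof (rule nth_equalityI)
  fix k
  assume "k < length cs"
  then have "map2 (-) cs ds ! k \<in> set (map2 (-) cs ds)"
    using assms(1) by (intro nth_mem) simp
  then have "map2 (-) cs ds ! k = 0"
    using assms(2) by blast
  then show "cs ! k = ds ! k"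
    using \<open>k < length cs\<close> assms(1) by simp
qed (rule assms(1))

lemma span_list_eq_image:
  "span_list ws = (\<lambda>cs. lcomb cs ws) ` {cs. set cs \<subseteq> UNIV \<and> length cs = length ws}"
  unfolding span_list_def by auto

lemma finite_span_list: "finite (span_list (ws :: (nat \<Rightarrow> 'a::{finite,field}) list))"
  unfolding span_list_eq_image by (intro finite_imageI finite_lists_length_eq) simp

lemma card_span_list_le:
  "card (span_list (ws :: (nat \<Rightarrow> 'a::{finite,field}) list)) \<le> card (UNIV :: 'a set) ^ length ws"
proof -
  have "card (span_list ws) \<le> card {cs :: 'a list. set cs \<subseteq> UNIV \<and> length cs = length ws}"
    unfolding span_list_eq_image by (intro card_image_le finite_lists_length_eq) simp
  also have "\<dots> = card (UNIV :: 'a set) ^ length ws"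
    by (rule card_lists_length_eq) simp
  finally show ?thesis .
qed

lemma card_span_list_lin_indep:
  fixes ws :: "(nat \<Rightarrow> 'a::{finite,field}) list"
  assumes "lin_indep UNIV ws"
  shows "card (span_list ws) = card (UNIV :: 'a set) ^ length ws"
proof -
  let ?D = "{cs :: 'a list. set cs \<subseteq> UNIV \<and> length cs = length ws}"
  have "inj_on (\<lambda>cs. lcomb cs ws) ?D"
  proof (rule inj_onI)
    fix cs ds
    assume "cs \<in> ?D" and "ds \<in> ?D" and "lcomb cs ws = lcomb ds ws"
    then have "lcomb (map2 (-) cs ds) ws = (\<lambda>i. 0)"
      by (simp add: lcomb_diff)
    moreover have "length (map2 (-) cs ds) = length ws"
      using \<open>cs \<in> ?D\<close> \<open>ds \<in> ?D\<close> by simp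
    ultimately have "set (map2 (-) cs ds) \<subseteq> {0}"
      using assms unfolding lin_indep_def by blast
    then show "cs = ds"
      using \<open>cs \<in> ?D\<close> \<open>ds \<in> ?D\<close> by (intro list_eq_if_map2_diff_zero) simp_all
  qed
  then have "card (span_list ws) = card ?D"
    unfolding span_list_eq_image by (rule card_image)
  also have "\<dots> = card (UNIV :: 'a set) ^ length ws"
    by (rule card_lists_length_eq) simp
  finally show ?thesis .
qed

lemma lin_indep_length_le:
  fixes ws :: "(nat \<Rightarrow> 'a::{finite,field}) list"
  assumes "lin_indep UNIV ws" and "span_list ws \<subseteq> span_list vs"
  shows "length ws \<le> length vs"
proof -
  have "card (UNIV :: 'a set) ^ length ws = card (span_list ws)"
    using card_span_list_lin_indep[OF assms(1)] by simp
  also have "\<dots> \<le> card (span_list vs)"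
    by (rule card_mono[OF finite_span_list assms(2)])
  also have "\<dots> \<le> card (UNIV :: 'a set) ^ length vs"
    by (rule card_span_list_le)
  finally have "card (UNIV :: 'a set) ^ length ws \<le> card (UNIV :: 'a set) ^ length vs" .
  moreover have "card (UNIV :: 'a set) > 1"
    using card_mono[of UNIV "{0, 1 :: 'a}"] by simp
  ultimately show ?thesis
    using power_le_imp_le_exp by blast
qed

lemma lin_indep_pair_iff:
  "lin_indep UNIV [v, w] \<longleftrightarrow> (\<forall>a b. (\<lambda>i. a * v i + b * w i) = (\<lambda>i. 0) \<longrightarrow> a = 0 \<and> b = 0)"
  (is "_ \<longleftrightarrow> ?pair")
proof
  assume indep: "lin_indep UNIV [v, w]"
  show ?pair
  proof (intro allI impI)
    fix a b
    assume "(\<lambda>i. a * v i + b * w i) = (\<lambda>i. 0)"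
    then have "lcomb [a, b] [v, w] = (\<lambda>i. 0)"
      by simp
    then show "a = 0 \<and> b = 0"
      using indep[unfolded lin_indep_def, rule_format, of "[a, b]"] by simp
  qed
next
  assume ?pair
  show "lin_indep UNIV [v, w]"
    unfolding lin_indep_def
  proof (intro allI impI)
    fix cs :: "'a list"
    assume cs: "length cs = length [v, w] \<and> set cs \<subseteq> UNIV \<and> lcomb cs [v, w] = (\<lambda>i. 0)"
    then obtain a b where "cs = [a, b]"
      by (auto simp: length_Suc_conv)
    with cs \<open>?pair\<close> show "set cs \<subseteq> {0}"
      by simp
  qed
qed

lemma lin_indep_pair_of_Cons:
  assumes "lin_indep UNIV (v # w # ws)"
  shows "lin_indep UNIV [v, w]"
  unfolding lin_indep_pair_iff
proof (intro allI impI)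
  fix a b
  assume "(\<lambda>i. a * v i + b * w i) = (\<lambda>i. 0)"
  then have "lcomb (a # b # replicate (length ws) 0) (v # w # ws) = (\<lambda>i. 0)"
    by (simp add: lcomb_replicate_0 add.assoc)
  then show "a = 0 \<and> b = 0"
    using assms[unfolded lin_indep_def, rule_format, of "a # b # replicate (length ws) 0"] by simp
qed
lemma lin_indep_pair_if_not_multiple:
  assumes "v \<noteq> (\<lambda>i. 0)" and "\<nexists>c. u = (\<lambda>i. c * v i)"
  shows "lin_indep UNIV [v, u]"
  unfolding lin_indep_pair_iff
proof (intro allI impI)
  fix a b
  assume "(\<lambda>i. a * v i + b * u i) = (\<lambda>i. 0)"
  then have comb: "a * v i + b * u i = 0" for i
    by (metis (mono_tags))
  have "b = 0"
  proof (rule ccontr)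
    assume "b \<noteq> 0"
    then have "u i = (- a / b) * v i" for i
      using comb[of i] by (simp add: field_simps eq_neg_iff_add_eq_0)
    with assms(2) show False
      by blast
  qed
  moreover obtain i where "v i \<noteq> 0"
    using assms(1) by blast
  ultimately show "a = 0 \<and> b = 0"
    using comb[of i] by simp
qed

section \<open>Galois-closed subspaces and dimension\<close>

lemma finite_vecs: "finite (vecs n :: (nat \<Rightarrow> 'a::{finite,field}) set)"
proof -
  have "vecs n = {f :: nat \<Rightarrow> 'a. \<forall>i. (i \<in> {..<n} \<longrightarrow> f i \<in> UNIV) \<and> (i \<notin> {..<n} \<longrightarrow> f i = 0)}"
    unfolding vecs_def by auto
  then show ?thesis
    by (simp only:) (rule finite_set_of_finite_funs; simp)
qed

lemma vsubspace_add: "vsubspace K A \<Longrightarrow> u \<in> A \<Longrightarrow> w \<in> A \<Longrightarrow> (\<lambda>i. u i + w i) \<in> A"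
  and vsubspace_scale: "vsubspace K A \<Longrightarrow> c \<in> K \<Longrightarrow> u \<in> A \<Longrightarrow> (\<lambda>i. c * u i) \<in> A"
  unfolding vsubspace_def by blast+

lemma vsubspace_vecs: "vsubspace UNIV (vecs n)"
  unfolding vsubspace_def vecs_def by auto

lemma vsubspace_Int: "vsubspace K A \<Longrightarrow> vsubspace K B \<Longrightarrow> vsubspace K (A \<inter> B)"
  unfolding vsubspace_def by blast

lemma exists_min_support_pivot:
  fixes A :: "(nat \<Rightarrow> 'a::field) set"
  assumes "vsubspace UNIV A" and "A \<subseteq> vecs n" and "a \<in> A" and "a \<noteq> (\<lambda>i. 0)"
  obtains w j where "w \<in> A" and "w j = 1" and "finite {i. w i \<noteq> 0}"
    and "\<And>y. y \<in> A \<Longrightarrow> y \<noteq> (\<lambda>i. 0) \<Longrightarrow> card {i. w i \<noteq> 0} \<le> card {i. y i \<noteq> 0}"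
proof -
  obtain a0 where a0: "a0 \<in> A" "a0 \<noteq> (\<lambda>i. 0)"
    and a0_min: "\<And>y. y \<in> A \<Longrightarrow> y \<noteq> (\<lambda>i. 0) \<Longrightarrow> card {i. a0 i \<noteq> 0} \<le> card {i. y i \<noteq> 0}"
    using ex_has_least_nat[of "\<lambda>y. y \<in> A \<and> y \<noteq> (\<lambda>i. 0)" a "\<lambda>y. card {i. y i \<noteq> 0}"] assms(3,4)
    by blast
  then obtain j where "a0 j \<noteq> 0"
    by auto
  define w where "w = (\<lambda>i. inverse (a0 j) * a0 i)"
  have "w \<in> A"
    using assms(1) a0(1) unfolding vsubspace_def w_def by blast
  moreover have "{i. w i \<noteq> 0} = {i. a0 i \<noteq> 0}"
    using \<open>a0 j \<noteq> 0\<close> by (auto simp: w_def)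
  moreover have "{i. a0 i \<noteq> 0} \<subseteq> {..<n}"
    using a0(1) assms(2) unfolding vecs_def by (auto simp: not_less[symmetric])
  ultimately show ?thesis
    using that[of w j] a0_min \<open>a0 j \<noteq> 0\<close> by (auto simp: w_def intro: finite_subset)
qed

lemma frobenius_fixed_if_min_support:
  assumes "q > 0" and "vsubspace UNIV A" and "galois_closed q A"
    and "w \<in> A" and "w j = 1" and "finite {i. w i \<noteq> 0}"
    and min: "\<And>y. y \<in> A \<Longrightarrow> y \<noteq> (\<lambda>i. 0) \<Longrightarrow> card {i. w i \<noteq> 0} \<le> card {i. y i \<noteq> 0}"
  shows "w i ^ q = w i"
proof (rule ccontr)
  assume "w i ^ q \<noteq> w i"
  define b where "b = (\<lambda>i. w i ^ q + (- 1) * w i)"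
  have "(\<lambda>i. w i ^ q) \<in> A"
    using assms(3,4) unfolding galois_closed_def by blast
  then have "b \<in> A"
    unfolding b_def using assms(2,4) by (intro vsubspace_add vsubspace_scale) auto
  moreover have "b \<noteq> (\<lambda>i. 0)"
    using \<open>w i ^ q \<noteq> w i\<close> by (auto simp: b_def fun_eq_iff)
  moreover have "{i. b i \<noteq> 0} \<subset> {i. w i \<noteq> 0}"
  proof -
    have "{i. b i \<noteq> 0} \<subseteq> {i. w i \<noteq> 0} - {j}"
      using assms(1,5) by (auto simp: b_def zero_power)
    then show ?thesis
      using assms(5) by auto
  qed
  then have "card {i. b i \<noteq> 0} < card {i. w i \<noteq> 0}"
    using assms(6) by (rule psubset_card_mono[rotated])
  ultimately show False
    using min[of b] by simp
qed

lemma lin_indep_Cons_pivot: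
  assumes "lin_indep UNIV ws" and "w j = 1" and "\<forall>x\<in>set ws. x j = 0"
  shows "lin_indep UNIV (w # ws)"
  unfolding lin_indep_def
proof (intro allI impI)
  fix cs :: "'a list"
  assume cs: "length cs = length (w # ws) \<and> set cs \<subseteq> UNIV \<and> lcomb cs (w # ws) = (\<lambda>i. 0)"
  then obtain c cs' where cs_eq: "cs = c # cs'" and len: "length cs' = length ws"
    by (cases cs) auto
  have "lcomb cs' ws j = 0"
    unfolding lcomb_def using assms(3) by (simp add: sum.neutral)
  moreover have "c * w j + lcomb cs' ws j = 0"
    using cs unfolding cs_eq by (metis lcomb_Cons)
  ultimately have "c = 0"
    using assms(2) by simp
  then have "lcomb cs' ws = (\<lambda>i. 0)"
    using cs unfolding cs_eq by simp
  then have "set cs' \<subseteq> {0}"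
    using assms(1) len unfolding lin_indep_def by blast
  then show "set cs \<subseteq> {0}"
    using \<open>c = 0\<close> cs_eq by simp
qed

lemma exists_frobenius_fixed_pivot:
  fixes A :: "(nat \<Rightarrow> 'a::field) set"
  assumes "q > 0" and "vsubspace UNIV A" and "A \<subseteq> vecs n" and "galois_closed q A"
    and "a \<in> A" and "a \<noteq> (\<lambda>i. 0)"
  obtains w j where "w \<in> A" and "w j = 1" and "\<forall>i. w i ^ q = w i"
proof -
  obtain w j where w: "w \<in> A" "w j = 1" "finite {i. w i \<noteq> 0}"
    and w_min: "\<And>y. y \<in> A \<Longrightarrow> y \<noteq> (\<lambda>i. 0) \<Longrightarrow> card {i. w i \<noteq> 0} \<le> card {i. y i \<noteq> 0}"
    using exists_min_support_pivot[OF assms(2,3,5,6)] by blast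
  then show ?thesis
    using frobenius_fixed_if_min_support[OF assms(1,2,4) w w_min] that by blast
qed

lemma span_list_Cons_pivot:
  assumes "vsubspace UNIV A" and "w \<in> A" and "w j = 1" and "{x \<in> A. x j = 0} \<subseteq> span_list ws"
  shows "A \<subseteq> span_list (w # ws)"
proof
  fix x
  assume "x \<in> A"
  define x' where "x' = (\<lambda>i. x i + (- x j) * w i)"
  have "x' \<in> A"
    unfolding x'_def
    by (rule vsubspace_add[OF assms(1) \<open>x \<in> A\<close> vsubspace_scale[OF assms(1) UNIV_I assms(2)]])
  then have "x' \<in> span_list ws"
    using assms(3,4) unfolding x'_def by auto
  then have "(\<lambda>i. x j * w i + x' i) \<in> span_list (w # ws)"
    by (rule span_list_Cons)
  then show "x \<in> span_list (w # ws)"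
    by (simp add: x'_def)
qed

lemma galois_closed_basis:
  fixes A :: "(nat \<Rightarrow> 'a::{finite,field}) set"
  assumes "q > 0" and "vsubspace UNIV A" and "A \<subseteq> vecs n" and "galois_closed q A"
  obtains ws where "lin_indep UNIV ws" and "span_list ws = A" and "\<forall>w\<in>set ws. \<forall>i. w i ^ q = w i"
proof -
  have "\<exists>ws. set ws \<subseteq> A \<and> lin_indep UNIV ws \<and> A \<subseteq> span_list ws \<and> (\<forall>w\<in>set ws. \<forall>i. w i ^ q = w i)"
    using assms(2-4)
  proof (induction "card A" arbitrary: A rule: less_induct)
    case less
    show ?case
    proof (cases "A \<subseteq> {(\<lambda>i. 0)}")
      case True
      then show ?thesis
        using span_listI[of "[]" "[]"] unfolding lin_indep_def by (intro exI[of _ "[]"]) auto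
    next
      case False
      then obtain a where "a \<in> A" and "a \<noteq> (\<lambda>i. 0)"
        by auto
      then obtain w j where w: "w \<in> A" "w j = 1" and w_fixed: "\<forall>i. w i ^ q = w i"
        using exists_frobenius_fixed_pivot[OF assms(1) less.prems] by blast
      define A' where "A' = {x \<in> A. x j = 0}"
      have "vsubspace UNIV A'"
        using less.prems(1) unfolding A'_def vsubspace_def by auto
      moreover have "A' \<subseteq> vecs n"
        using less.prems(2) unfolding A'_def by blast
      moreover have "galois_closed q A'"
        using less.prems(3) assms(1) unfolding A'_def galois_closed_def by (simp add: zero_power)
      moreover have "A' \<subseteq> A" and "w \<notin> A'"
        using w(2) unfolding A'_def by auto
      then have "A' \<subset> A"
        using w(1) by blast
      then have "card A' < card A"
        using finite_subset[OF less.prems(2) finite_vecs] by (rule psubset_card_mono[rotated])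
      ultimately obtain ws where ws: "set ws \<subseteq> A'" "lin_indep UNIV ws" "A' \<subseteq> span_list ws"
        "\<forall>w\<in>set ws. \<forall>i. w i ^ q = w i"
        using less.hyps by blast
      have "lin_indep UNIV (w # ws)"
        using ws(1,2) w(2) by (intro lin_indep_Cons_pivot) (auto simp: A'_def)
      moreover have "A \<subseteq> span_list (w # ws)"
        using ws(3) by (intro span_list_Cons_pivot[OF less.prems(1) w]) (simp add: A'_def)
      ultimately show ?thesis
        using ws(1,4) w(1) w_fixed by (intro exI[of _ "w # ws"]) (auto simp: A'_def)
    qed
  qed
  then show ?thesis
    using that span_list_subset[OF assms(2)] by blast
qed

lemma vdim_basis:
  fixes A :: "(nat \<Rightarrow> 'a::{finite,field}) set"
  assumes "vsubspace UNIV A" and "A \<subseteq> vecs n"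
  obtains B where "length B = vdim UNIV A" and "lin_indep UNIV B" and "span_list B = A"
proof -
  have "galois_closed 1 A"
    unfolding galois_closed_def by simp
  then obtain ws where "lin_indep UNIV ws" and "span_list ws = A"
    by (rule galois_closed_basis[OF zero_less_one assms])
  moreover have "set ws \<subseteq> A" and "vspan UNIV (set ws) = A"
    using set_subset_span_list[of ws] span_list_eq_vspan[of ws] \<open>span_list ws = A\<close> by simp_all
  ultimately have "\<exists>d B. length B = d \<and> lin_indep UNIV B \<and> set B \<subseteq> A \<and> vspan UNIV (set B) = A"
    by blast
  then have "\<exists>B. length B = vdim UNIV A \<and> lin_indep UNIV B \<and> set B \<subseteq> A \<and> vspan UNIV (set B) = A"
    unfolding vdim_def by (rule LeastI_ex)
  then obtain B where "length B = vdim UNIV A" and "lin_indep UNIV B" and "vspan UNIV (set B) = A"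
    by blast
  then show ?thesis
    using that[of B] by (simp add: span_list_eq_vspan)
qed

lemma lin_indep_length_le_vdim:
  fixes A :: "(nat \<Rightarrow> 'a::{finite,field}) set"
  assumes "vsubspace UNIV A" and "A \<subseteq> vecs n" and "lin_indep UNIV ws" and "set ws \<subseteq> A"
  shows "length ws \<le> vdim UNIV A"
proof -
  obtain B where "length B = vdim UNIV A" and "span_list B = A"
    using vdim_basis[OF assms(1,2)] by blast
  moreover have "span_list ws \<subseteq> A"
    by (rule span_list_subset[OF assms(1,4)])
  ultimately show ?thesis
    using lin_indep_length_le[OF assms(3), of B] by simp
qed

lemma vdim_le_length:
  fixes A :: "(nat \<Rightarrow> 'a::{finite,field}) set"
  assumes "vsubspace UNIV A" and "A \<subseteq> vecs n" and "A \<subseteq> span_list ws"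
  shows "vdim UNIV A \<le> length ws"
proof -
  obtain B where "length B = vdim UNIV A" and "lin_indep UNIV B" and "span_list B = A"
    using vdim_basis[OF assms(1,2)] by blast
  moreover have "span_list B \<subseteq> span_list ws"
    using \<open>span_list B = A\<close> assms(3) by simp
  ultimately show ?thesis
    using lin_indep_length_le[of B ws] by simp
qed

lemma lin_indep_pair_if_vdim_ge_2:
  fixes A :: "(nat \<Rightarrow> 'a::{finite,field}) set"
  assumes "vsubspace UNIV A" and "A \<subseteq> vecs n" and "vdim UNIV A \<ge> 2"
  obtains v w where "v \<in> A" and "w \<in> A" and "lin_indep UNIV [v, w]"
proof -
  obtain B where "length B = vdim UNIV A" and "lin_indep UNIV B" and "span_list B = A"
    using vdim_basis[OF assms(1,2)] by blast
  moreover obtain v w ws where "B = v # w # ws"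
    using \<open>length B = vdim UNIV A\<close> assms(3) by (cases B; cases "tl B") auto
  ultimately show ?thesis
    using that[of v w] lin_indep_pair_of_Cons[of v w ws] set_subset_span_list[of B] by simp
qed

section \<open>Rank support\<close>

definition dotp :: "nat \<Rightarrow> (nat \<Rightarrow> 'a::field) \<Rightarrow> (nat \<Rightarrow> 'a) \<Rightarrow> 'a" where
  "dotp n v y = (\<Sum>j<n. v j * y j)"

lemma dotp_lcomb: "dotp n (lcomb cs ws) y = (\<Sum>i<length ws. cs ! i * dotp n (ws ! i) y)"
proof -
  have "dotp n (lcomb cs ws) y = (\<Sum>j<n. \<Sum>i<length ws. cs ! i * ((ws ! i) j * y j))"
    unfolding dotp_def lcomb_def by (simp add: sum_distrib_right mult.assoc)
  also have "\<dots> = (\<Sum>i<length ws. cs ! i * dotp n (ws ! i) y)"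
    unfolding dotp_def by (subst sum.swap) (simp add: sum_distrib_left)
  finally show ?thesis .
qed

lemma dotp_linear: "dotp n (\<lambda>i. a * v i + b * w i) y = a * dotp n v y + b * dotp n w y"
  unfolding dotp_def by (simp add: sum.distrib sum_distrib_left algebra_simps)

lemma dotp_scale: "dotp n (\<lambda>i. c * v i) y = c * dotp n v y"
  unfolding dotp_def by (simp add: sum_distrib_left mult.assoc)

lemma sspan_mono: "S \<subseteq> T \<Longrightarrow> sspan K S \<subseteq> sspan K T"
  unfolding sspan_def by blast

lemma sum_in_sspan:
  assumes "\<And>i. i < length us \<Longrightarrow> c i \<in> K"
  shows "(\<Sum>i<length us. c i * us ! i) \<in> sspan K (set us)"
  unfolding sspan_def using assms
  by (intro CollectI exI[of _ us] exI[of _ "map c [0..<length us]"]) auto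

lemma in_sspan_image_iff:
  fixes v :: "nat \<Rightarrow> 'a::field" and n :: nat
  assumes "is_subfield K"
  shows "x \<in> sspan K (v ` {..<n}) \<longleftrightarrow> (\<exists>y. (\<forall>j. y j \<in> K) \<and> x = (\<Sum>j<n. y j * v j))"
proof
  assume "x \<in> sspan K (v ` {..<n})"
  then obtain us cs where us: "set us \<subseteq> v ` {..<n}" and "length cs = length us"
    and "set cs \<subseteq> K" and x: "x = (\<Sum>k<length us. cs ! k * us ! k)"
    unfolding sspan_def by blast
  then have cs_K: "k < length us \<Longrightarrow> cs ! k \<in> K" for k
    by (metis nth_mem subsetD)
  have "\<forall>k<length us. \<exists>j<n. us ! k = v j"
    using us by (metis imageE lessThan_iff nth_mem subsetD)
  then obtain J where J: "\<And>k. k < length us \<Longrightarrow> J k < n \<and> us ! k = v (J k)"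
    by metis
  define y where "y j = (\<Sum>k\<in>{k \<in> {..<length us}. J k = j}. cs ! k)" for j
  have "(\<Sum>j<n. y j * v j) = (\<Sum>j<n. \<Sum>k\<in>{k \<in> {..<length us}. J k = j}. cs ! k * v (J k))"
    unfolding y_def sum_distrib_right by (intro sum.cong) auto
  also have "\<dots> = (\<Sum>k<length us. cs ! k * v (J k))"
    by (rule sum.group) (use J in auto)
  also have "\<dots> = x"
    unfolding x using J by simp
  finally show "\<exists>y. (\<forall>j. y j \<in> K) \<and> x = (\<Sum>j<n. y j * v j)"
    using cs_K by (intro exI[of _ y]) (auto simp: y_def intro: is_subfield_sum[OF assms])
next
  assume "\<exists>y. (\<forall>j. y j \<in> K) \<and> x = (\<Sum>j<n. y j * v j)"
  then obtain y where "\<forall>j. y j \<in> K" and "x = (\<Sum>j<n. y j * v j)"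
    by blast
  then show "x \<in> sspan K (v ` {..<n})"
    using sum_in_sspan[of "map v [0..<n]" y K] by (simp add: atLeast0LessThan)
qed

lemma sindep_coeff_zero:
  assumes "sindep K us" and "\<And>i. i < length us \<Longrightarrow> c i \<in> K"
    and "(\<Sum>i<length us. c i * us ! i) = 0" and "i < length us"
  shows "c i = 0"
proof -
  let ?cs = "map c [0..<length us]"
  have "length ?cs = length us" and "set ?cs \<subseteq> K" and "(\<Sum>j<length us. ?cs ! j * us ! j) = 0"
    using assms(2,3) by auto
  then have "set ?cs \<subseteq> {0}"
    using assms(1) unfolding sindep_def by blast
  then show ?thesis
    using assms(4) by (auto simp: image_subset_iff)
qed

lemma sindep_snoc:
  assumes "is_subfield K" and "sindep K us"
    and "\<nexists>c. (\<forall>i<length us. c i \<in> K) \<and> x = (\<Sum>i<length us. c i * us ! i)"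
  shows "sindep K (us @ [x])"
  unfolding sindep_def
proof (intro allI impI)
  fix cs
  assume cs: "length cs = length (us @ [x]) \<and> set cs \<subseteq> K
    \<and> (\<Sum>j<length (us @ [x]). cs ! j * (us @ [x]) ! j) = 0"
  let ?r = "length us"
  have cs_K: "j < Suc ?r \<Longrightarrow> cs ! j \<in> K" for j
    using cs nth_mem[of j cs] by auto
  have sum: "(\<Sum>j<?r. cs ! j * us ! j) + cs ! ?r * x = 0"
    using cs by (simp add: nth_append)
  have "cs ! ?r = 0"
  proof (rule ccontr)
    assume "cs ! ?r \<noteq> 0"
    then have "x = - (\<Sum>j<?r. cs ! j * us ! j) / cs ! ?r"
      using sum by (simp add: field_simps eq_neg_iff_add_eq_0)
    also have "\<dots> = (\<Sum>j<?r. (- cs ! j / cs ! ?r) * us ! j)"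
      by (simp add: sum_divide_distrib sum_negf[symmetric])
    finally have "x = (\<Sum>j<?r. (- cs ! j / cs ! ?r) * us ! j)" .
    moreover have "\<forall>j<?r. - cs ! j / cs ! ?r \<in> K"
      using cs_K is_subfieldD(5,8)[OF assms(1)] by simp
    ultimately show False
      using assms(3) by (auto intro!: exI[of _ "\<lambda>j. - cs ! j / cs ! ?r"])
  qed
  then have sum0: "(\<Sum>j<?r. cs ! j * us ! j) = 0"
    using sum by simp
  have "cs ! j = 0" if "j < ?r" for j
    by (rule sindep_coeff_zero[OF assms(2) _ sum0 that]) (simp add: cs_K)
  with \<open>cs ! ?r = 0\<close> have "cs ! j = 0" if "j < length cs" for j
    using that cs by (cases "j = ?r") auto
  then show "set cs \<subseteq> {0}"
    by (auto simp: set_conv_nth)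
qed

lemma sindep_card_le:
  fixes us :: "'a::{finite,field} list"
  assumes "is_subfield K" and "sindep K us"
  shows "card K ^ length us \<le> card (UNIV :: 'a set)"
proof -
  let ?D = "{cs. set cs \<subseteq> K \<and> length cs = length us}"
  have "inj_on (\<lambda>cs. \<Sum>j<length us. cs ! j * us ! j) ?D"
  proof (rule inj_onI)
    fix cs ds
    assume cs: "cs \<in> ?D" and ds: "ds \<in> ?D"
      and eq: "(\<Sum>j<length us. cs ! j * us ! j) = (\<Sum>j<length us. ds ! j * us ! j)"
    have "(\<Sum>j<length us. map2 (-) cs ds ! j * us ! j) = 0"
      using cs ds eq by (simp add: sum_subtractf left_diff_distrib)
    moreover have "cs ! j - ds ! j \<in> K" if "j < length us" for j
    proof -
      have "cs ! j \<in> set cs" and "ds ! j \<in> set ds"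
        using that cs ds by simp_all
      then show ?thesis
        using cs ds is_subfieldD(7)[OF assms(1)] by blast
    qed
    then have "set (map2 (-) cs ds) \<subseteq> K"
      using cs ds by (auto simp: set_conv_nth)
    moreover have "length (map2 (-) cs ds) = length us"
      using cs ds by simp
    ultimately have "set (map2 (-) cs ds) \<subseteq> {0}"
      using assms(2) unfolding sindep_def by blast
    then show "cs = ds"
      using cs ds by (intro list_eq_if_map2_diff_zero) simp_all
  qed
  then have "card K ^ length us = card ((\<lambda>cs. \<Sum>j<length us. cs ! j * us ! j) ` ?D)"
    by (simp add: card_image card_lists_length_eq)
  also have "\<dots> \<le> card (UNIV :: 'a set)"
    by (rule card_mono) simp_all
  finally show ?thesis .
qed

definition coord_matrix ::
    "'a::field set \<Rightarrow> nat \<Rightarrow> (nat \<Rightarrow> 'a) \<Rightarrow> 'a list \<Rightarrow> (nat \<Rightarrow> nat \<Rightarrow> 'a) \<Rightarrow> bool" where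
  "coord_matrix K N v u M \<longleftrightarrow> (\<forall>i j. M i j \<in> K)
     \<and> (\<forall>i j. length u \<le> i \<or> N \<le> j \<longrightarrow> M i j = 0) \<and> (\<forall>j<N. v j = (\<Sum>i<length u. u ! i * M i j))"

lemma supp_repr_iff:
  "supp_repr K n v u M \<longleftrightarrow>
     sindep K u \<and> sspan K (set u) = sspan K (v ` {..<n}) \<and> coord_matrix K n v u M"
  unfolding supp_repr_def coord_matrix_def by auto

lemma coord_matrix_extend:
  assumes M: "coord_matrix K N v u M" and "\<And>i. c i \<in> K"
    and "\<And>i. length (u @ us) \<le> i \<Longrightarrow> c i = 0"
    and "v N = (\<Sum>i<length (u @ us). (u @ us) ! i * c i)"
  shows "coord_matrix K (Suc N) v (u @ us) (\<lambda>i j. if j = N then c i else M i j)"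
proof -
  have "(\<Sum>i<length (u @ us). (u @ us) ! i * M i j) = (\<Sum>i<length u. u ! i * M i j)" if "j < N" for j
  proof (rule sum.mono_neutral_cong_right)
    show "\<forall>i\<in>{..<length (u @ us)} - {..<length u}. (u @ us) ! i * M i j = 0"
      using M unfolding coord_matrix_def by simp
  qed (auto simp: nth_append)
  then show ?thesis
    using assms unfolding coord_matrix_def by (auto simp: less_Suc_eq)
qed

lemma exists_sindep_coord_matrix:
  assumes "is_subfield K"
  shows "\<exists>u M. sindep K u \<and> set u \<subseteq> v ` {..<N} \<and> coord_matrix K N v u M"
proof (induction N)
  case 0
  have "sindep K []" and "coord_matrix K 0 v [] (\<lambda>i j. 0)"
    using is_subfieldD(1)[OF assms] unfolding sindep_def coord_matrix_def by simp_all
  then show ?case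
    by (intro exI[of _ "[]"] exI[of _ "\<lambda>i j. 0"]) simp
next
  case (Suc N)
  then obtain u M where u: "sindep K u" "set u \<subseteq> v ` {..<N}" and M: "coord_matrix K N v u M"
    by blast
  show ?case
  proof (cases "\<exists>c. (\<forall>i<length u. c i \<in> K) \<and> v N = (\<Sum>i<length u. c i * u ! i)")
    case True
    then obtain c where c: "\<forall>i<length u. c i \<in> K" "v N = (\<Sum>i<length u. c i * u ! i)"
      by blast
    have "coord_matrix K (Suc N) v (u @ [])
        (\<lambda>i j. if j = N then (if i < length u then c i else 0) else M i j)"
      by (rule coord_matrix_extend[OF M])
        (use c is_subfieldD(1)[OF assms] in \<open>simp_all add: mult.commute\<close>)
    then show ?thesis
      using u by (intro exI[of _ u]) auto
  next
    case False
    have "sindep K (u @ [v N])"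
      by (rule sindep_snoc[OF assms u(1) False])
    moreover have "coord_matrix K (Suc N) v (u @ [v N])
        (\<lambda>i j. if j = N then (if i = length u then 1 else 0) else M i j)"
      by (rule coord_matrix_extend[OF M])
        (use is_subfieldD(1,2)[OF assms] in \<open>simp_all add: nth_append\<close>)
    moreover have "set (u @ [v N]) \<subseteq> v ` {..<Suc N}"
      using u(2) by auto
    ultimately show ?thesis
      by blast
  qed
qed

lemma supp_repr_exists:
  fixes v :: "nat \<Rightarrow> 'a::field"
  assumes "is_subfield K"
  obtains u M where "supp_repr K n v u M"
proof -
  obtain u M where u: "sindep K u" "set u \<subseteq> v ` {..<n}" and M: "coord_matrix K n v u M"
    using exists_sindep_coord_matrix[OF assms] by blast
  have "sspan K (v ` {..<n}) \<subseteq> sspan K (set u)"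
  proof
    fix x
    assume "x \<in> sspan K (v ` {..<n})"
    then obtain y where y: "\<forall>j. y j \<in> K" and x: "x = (\<Sum>j<n. y j * v j)"
      using in_sspan_image_iff[OF assms] by blast
    have "x = (\<Sum>j<n. \<Sum>i<length u. y j * M i j * u ! i)"
      unfolding x using M unfolding coord_matrix_def by (simp add: sum_distrib_left mult_ac)
    also have "\<dots> = (\<Sum>i<length u. (\<Sum>j<n. y j * M i j) * u ! i)"
      by (subst sum.swap) (simp add: sum_distrib_right)
    also have "\<dots> \<in> sspan K (set u)"
      using y M unfolding coord_matrix_def
      by (intro sum_in_sspan is_subfield_sum[OF assms] is_subfieldD(4)[OF assms]) simp_all
    finally show "x \<in> sspan K (set u)" .
  qed
  moreover have "sspan K (set u) \<subseteq> sspan K (v ` {..<n})"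
    by (rule sspan_mono[OF u(2)])
  ultimately show ?thesis
    using that u(1) M by (simp add: supp_repr_iff)
qed

definition orth_ker :: "'a::field set \<Rightarrow> nat \<Rightarrow> (nat \<Rightarrow> 'a) \<Rightarrow> (nat \<Rightarrow> 'a) set" where
  "orth_ker K n v = {x. (\<forall>j. x j \<in> K) \<and> (\<forall>j\<ge>n. x j = 0)
     \<and> (\<forall>y. (\<forall>j. y j \<in> K) \<longrightarrow> dotp n v y = 0 \<longrightarrow> dotp n x y = 0)}"

lemma supp_repr_dotp:
  assumes "supp_repr K n v u M"
  shows "dotp n v y = (\<Sum>i<length u. dotp n (M i) y * u ! i)"
proof -
  have "dotp n v y = (\<Sum>j<n. \<Sum>i<length u. M i j * y j * u ! i)"
    unfolding dotp_def using assms unfolding supp_repr_def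
    by (intro sum.cong) (simp_all add: sum_distrib_left sum_distrib_right mult_ac)
  also have "\<dots> = (\<Sum>i<length u. dotp n (M i) y * u ! i)"
    unfolding dotp_def by (subst sum.swap) (simp add: sum_distrib_right)
  finally show ?thesis .
qed

lemma supp_repr_row_in_orth_ker:
  assumes "is_subfield K" and R: "supp_repr K n v u M" and "i < length u"
  shows "M i \<in> orth_ker K n v"
proof -
  have "dotp n (M i) y = 0" if y: "\<forall>j. y j \<in> K" and "dotp n v y = 0" for y
  proof (rule sindep_coeff_zero[where c = "\<lambda>i. dotp n (M i) y"])
    show "sindep K u"
      using R unfolding supp_repr_def by simp
    show "dotp n (M l) y \<in> K" for l
      unfolding dotp_def using R y unfolding supp_repr_def
      by (intro is_subfield_sum[OF assms(1)] is_subfieldD(4)[OF assms(1)]) simp_all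
    show "(\<Sum>l<length u. dotp n (M l) y * u ! l) = 0"
      using supp_repr_dotp[OF R] \<open>dotp n v y = 0\<close> by simp
  qed (rule assms(3))
  then show ?thesis
    using R unfolding orth_ker_def supp_repr_def by simp
qed

lemma vsubspace_orth_ker:
  assumes "is_subfield K"
  shows "vsubspace K (orth_ker K n v)"
  unfolding vsubspace_def
proof (intro conjI ballI)
  show "(\<lambda>i. 0) \<in> orth_ker K n v"
    unfolding orth_ker_def dotp_def using is_subfieldD(1)[OF assms] by simp
next
  fix x x'
  assume "x \<in> orth_ker K n v" and "x' \<in> orth_ker K n v"
  moreover have "dotp n (\<lambda>i. x i + x' i) y = dotp n x y + dotp n x' y" for y
    using dotp_linear[of n 1 x 1 x' y] by simp
  ultimately show "(\<lambda>i. x i + x' i) \<in> orth_ker K n v"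
    unfolding orth_ker_def using is_subfieldD(3)[OF assms] by simp
next
  fix c x
  assume "c \<in> K" and "x \<in> orth_ker K n v"
  then show "(\<lambda>i. c * x i) \<in> orth_ker K n v"
    unfolding orth_ker_def using is_subfieldD(4)[OF assms] by (simp add: dotp_scale)
qed

lemma in_sspan: "1 \<in> K \<Longrightarrow> x \<in> S \<Longrightarrow> x \<in> sspan K S"
  unfolding sspan_def by (intro CollectI exI[of _ "[x]"] exI[of _ "[1]"]) simp

lemma supp_repr_basis_coords:
  assumes K: "is_subfield K" and R: "supp_repr K n v u M"
  obtains Y where "\<And>i. i < length u \<Longrightarrow> (\<forall>j. Y i j \<in> K) \<and> u ! i = dotp n v (Y i)"
proof -
  have "\<exists>Yi. (\<forall>j. Yi j \<in> K) \<and> u ! i = dotp n v Yi" if "i < length u" for i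
  proof -
    have "u ! i \<in> sspan K (v ` {..<n})"
      using R that in_sspan[OF is_subfieldD(2)[OF K], of "u ! i" "set u"]
      unfolding supp_repr_def by simp
    then show ?thesis
      unfolding in_sspan_image_iff[OF K] dotp_def by (auto simp: mult.commute)
  qed
  then show ?thesis
    using that by metis
qed

lemma orth_ker_coords:
  assumes K: "is_subfield K" and R: "supp_repr K n v u M"
    and Y: "\<And>i. i < length u \<Longrightarrow> (\<forall>j. Y i j \<in> K) \<and> u ! i = dotp n v (Y i)"
    and x: "x \<in> orth_ker K n v"
  shows "x l = (\<Sum>i<length u. dotp n x (Y i) * M i l)"
proof (cases "l < n")
  case True
  let ?r = "length u"
  \<comment> \<open>\<open>v \<cdot> z = (\<Sum>i. M i l * u ! i) - v l = 0\<close>, so \<open>x \<cdot> z = 0\<close> yields the \<open>l\<close>-th coordinate of \<open>x\<close>\<close>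
  define z where "z j = (\<Sum>i<?r. M i l * Y i j) - (if j = l then 1 else 0)" for j
  have dotp_z: "dotp n f z = (\<Sum>i<?r. M i l * dotp n f (Y i)) - f l" for f
  proof -
    have "(\<Sum>j<n. f j * (\<Sum>i<?r. M i l * Y i j)) = (\<Sum>i<?r. M i l * dotp n f (Y i))"
      unfolding dotp_def sum_distrib_left by (subst sum.swap) (simp add: mult_ac)
    moreover have "(\<Sum>j<n. f j * (if j = l then 1 else 0)) = f l"
      using True by (simp add: if_distrib cong: if_cong)
    ultimately show ?thesis
      unfolding dotp_def z_def right_diff_distrib sum_subtractf by simp
  qed
  have "\<forall>j. z j \<in> K"
    unfolding z_def using Y R K unfolding supp_repr_def
    by (auto intro!: is_subfieldD(7)[OF K] is_subfield_sum[OF K] is_subfieldD(4)[OF K]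
        simp: is_subfieldD(1,2)[OF K])
  moreover have "dotp n v z = 0"
    using R True unfolding dotp_z supp_repr_def by (simp add: Y mult.commute)
  ultimately have "dotp n x z = 0"
    using x unfolding orth_ker_def by blast
  then show ?thesis
    unfolding dotp_z by (simp add: mult.commute)
next
  case False
  then show ?thesis
    using x R unfolding orth_ker_def supp_repr_def by simp
qed

lemma orth_ker_subset_vspan_rows:
  assumes K: "is_subfield K" and R: "supp_repr K n v u M"
  shows "orth_ker K n v \<subseteq> vspan K (M ` {..<length u})"
proof
  fix x
  assume x: "x \<in> orth_ker K n v"
  let ?r = "length u"
  obtain Y where Y: "\<And>i. i < ?r \<Longrightarrow> (\<forall>j. Y i j \<in> K) \<and> u ! i = dotp n v (Y i)"
    using supp_repr_basis_coords[OF K R] by blast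
  define c where "c i = dotp n x (Y i)" for i
  have "x = lcomb (map c [0..<?r]) (map M [0..<?r])"
    using orth_ker_coords[OF K R Y x] by (simp add: c_def lcomb_def fun_eq_iff)
  moreover have "c i \<in> K" if "i < ?r" for i
    unfolding c_def dotp_def using x Y[OF that] unfolding orth_ker_def
    by (intro is_subfield_sum[OF K] is_subfieldD(4)[OF K]) simp_all
  ultimately show "x \<in> vspan K (M ` {..<?r})"
    unfolding vspan_def
    by (intro CollectI exI[of _ "map M [0..<?r]"] exI[of _ "map c [0..<?r]"]) auto
qed

lemma rank_supp_repr:
  assumes "is_subfield K"
  obtains u M where "supp_repr K n v u M" and "rank_supp K n v = vspan K (M ` {..<length u})"
proof -
  define P where "P = (SOME p. supp_repr K n v (fst p) (snd p))"
  have "\<exists>p. supp_repr K n v (fst p) (snd p)"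
    using supp_repr_exists[OF assms] by (metis fst_conv snd_conv)
  then have "supp_repr K n v (fst P) (snd P)"
    unfolding P_def by (rule someI_ex)
  moreover have "{A i | i. i < N} = A ` {..<N}" for A :: "nat \<Rightarrow> nat \<Rightarrow> 'a" and N
    by auto
  then have "rank_supp K n v = vspan K (snd P ` {..<length (fst P)})"
    unfolding rank_supp_def P_def[symmetric] by (cases P) simp
  ultimately show ?thesis
    using that by blast
qed

lemma rank_supp_eq_orth_ker:
  assumes "is_subfield K"
  shows "rank_supp K n v = orth_ker K n v"
proof -
  obtain u M where R: "supp_repr K n v u M"
    and supp: "rank_supp K n v = vspan K (M ` {..<length u})"
    using rank_supp_repr[OF assms] by blast
  have "vspan K (M ` {..<length u}) \<subseteq> orth_ker K n v"
    using supp_repr_row_in_orth_ker[OF assms R]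
    by (intro vspan_subset[OF vsubspace_orth_ker[OF assms]]) auto
  then show ?thesis
    unfolding supp using orth_ker_subset_vspan_rows[OF assms R] by blast
qed

lemma rank_supp_mono:
  assumes "is_subfield K" and "\<forall>y. (\<forall>j. y j \<in> K) \<longrightarrow> dotp n c y = 0 \<longrightarrow> dotp n v y = 0"
  shows "rank_supp K n v \<subseteq> rank_supp K n c"
  using assms(2) unfolding rank_supp_eq_orth_ker[OF assms(1)] orth_ker_def by blast

lemma supp_repr_lcomb_rows:
  assumes "supp_repr K n v u M" and "v \<in> vecs n"
  shows "v = lcomb u (map M [0..<length u])"
proof
  fix l
  show "v l = lcomb u (map M [0..<length u]) l"
    using assms unfolding supp_repr_def vecs_def lcomb_def by (cases "l < n") simp_all
qed

section \<open>Generalized rank weights and minimal codes\<close>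

lemma galois_closed_span_list:
  assumes "prime CHAR('a::{finite,field})" and "q = CHAR('a) ^ e"
    and "\<forall>w\<in>set ws. \<forall>j. w j \<in> subfield_q q"
  shows "galois_closed q (span_list ws :: (nat \<Rightarrow> 'a) set)"
  unfolding galois_closed_def
proof
  fix x
  assume "x \<in> span_list ws"
  then obtain cs where cs: "length cs = length ws" "x = lcomb cs ws"
    by (rule span_listE)
  have "(\<lambda>i. x i ^ q) = lcomb (map (\<lambda>c. c ^ q) cs) ws"
  proof
    fix i
    have "x i ^ q = (\<Sum>k<length ws. (cs ! k) ^ q * (ws ! k) i ^ q)"
      unfolding cs(2) lcomb_def
      by (simp add: freshmans_dream_sum'[OF assms(1,2)] power_mult_distrib)
    also have "\<dots> = lcomb (map (\<lambda>c. c ^ q) cs) ws i"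
      using assms(3) cs(1) unfolding lcomb_def subfield_q_def by simp
    finally show "x i ^ q = lcomb (map (\<lambda>c. c ^ q) cs) ws i" .
  qed
  then show "(\<lambda>i. x i ^ q) \<in> span_list ws"
    using span_listI[of "map (\<lambda>c. c ^ q) cs" ws] cs(1) by simp
qed

text \<open>Every nonzero point of \<open>I\<close> lies on exactly one line through the origin. There are
  \<open>card UNIV + 1\<close> such lines, indexed below by \<open>D\<close>, but fewer nonzero points in \<open>I\<close>.\<close>

lemma exists_line_meeting_only_at_origin:
  fixes I :: "('a::{finite,field} \<times> 'a) set"
  assumes "card I \<le> card (UNIV :: 'a set)"
  shows "\<exists>a b. (a, b) \<noteq> (0, 0) \<and> (\<forall>(s, t)\<in>I. a * s + b * t = 0 \<longrightarrow> s = 0 \<and> t = 0)"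
proof (rule ccontr)
  assume "\<not> ?thesis"
  then have hit: "\<exists>s t. (s, t) \<in> I - {(0, 0)} \<and> a * s + b * t = 0" if "(a, b) \<noteq> (0, 0)" for a b
    using that by blast
  define line :: "'a \<times> 'a \<Rightarrow> 'a \<times> 'a"
    where "line = (\<lambda>(s, t). if t = 0 then (0, 1) else (1, - s / t))"
  define D :: "('a \<times> 'a) set" where "D = insert (0, 1) (range (\<lambda>b. (1, b)))"
  have "D \<subseteq> line ` (I - {(0, 0)})"
  proof -
    obtain s t where "(s, t) \<in> I - {(0, 0)}" and "t = 0"
      using hit[of 0 1] by auto
    then have "(0, 1) \<in> line ` (I - {(0, 0)})"
      unfolding line_def by (intro image_eqI[of _ _ "(s, t)"]) auto
    moreover have "(1, b) \<in> line ` (I - {(0, 0)})" for b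
    proof -
      obtain s t where st: "(s, t) \<in> I - {(0, 0)}" and "s + b * t = 0"
        using hit[of 1 b] by auto
      then have "t \<noteq> 0"
        by auto
      with \<open>s + b * t = 0\<close> have "b = - s / t"
        by (simp add: field_simps eq_neg_iff_add_eq_0)
      then show ?thesis
        using st \<open>t \<noteq> 0\<close> unfolding line_def by (intro image_eqI[of _ _ "(s, t)"]) auto
    qed
    ultimately show ?thesis
      unfolding D_def by blast
  qed
  then have "card D \<le> card (I - {(0, 0)})"
    using card_image_le[of "I - {(0, 0)}" line] card_mono[of "line ` (I - {(0, 0)})" D] by simp
  also have "\<dots> \<le> card (UNIV :: 'a set)"
    using assms card_Diff1_le[of I "(0, 0)"] by simp
  finally have "card D \<le> card (UNIV :: 'a set)" .
  moreover have "card D = card (UNIV :: 'a set) + 1"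
    unfolding D_def by (simp add: card_image inj_on_def image_iff)
  ultimately show False
    by simp
qed

lemma card_dotp_pairs_le:
  fixes ws :: "(nat \<Rightarrow> 'a::{finite,field}) list"
  assumes K: "is_subfield K" and "v \<in> span_list ws" and "w \<in> span_list ws"
    and ws_K: "\<forall>x\<in>set ws. \<forall>j. x j \<in> K"
  shows "card {(dotp n v y, dotp n w y) | y. \<forall>j. y j \<in> K} \<le> card K ^ length ws"
proof -
  obtain \<alpha> where "length \<alpha> = length ws" and v: "v = lcomb \<alpha> ws"
    using assms(2) by (rule span_listE)
  obtain \<beta> where "length \<beta> = length ws" and w: "w = lcomb \<beta> ws"
    using assms(3) by (rule span_listE)
  let ?D = "{\<tau>. set \<tau> \<subseteq> K \<and> length \<tau> = length ws}"
  let ?f = "\<lambda>\<tau>. ((\<Sum>i<length ws. \<alpha> ! i * \<tau> ! i), (\<Sum>i<length ws. \<beta> ! i * \<tau> ! i))"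
  have "{(dotp n v y, dotp n w y) | y. \<forall>j. y j \<in> K} \<subseteq> ?f ` ?D"
  proof clarify
    fix y :: "nat \<Rightarrow> 'a"
    assume y: "\<forall>j. y j \<in> K"
    define \<tau> where "\<tau> = map (\<lambda>i. dotp n (ws ! i) y) [0..<length ws]"
    have "dotp n (ws ! i) y \<in> K" if "i < length ws" for i
      unfolding dotp_def using y ws_K nth_mem[OF that]
      by (intro is_subfield_sum[OF K] is_subfieldD(4)[OF K]) simp_all
    then have "\<tau> \<in> ?D"
      unfolding \<tau>_def by auto
    moreover have "(dotp n v y, dotp n w y) = ?f \<tau>"
      unfolding v w dotp_lcomb \<tau>_def by simp
    ultimately show "(dotp n v y, dotp n w y) \<in> ?f ` ?D"
      by blast
  qed
  then have "card {(dotp n v y, dotp n w y) | y. \<forall>j. y j \<in> K} \<le> card (?f ` ?D)"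
    by (intro card_mono finite_imageI finite_lists_length_eq) simp_all
  also have "\<dots> \<le> card ?D"
    by (intro card_image_le finite_lists_length_eq) simp
  also have "\<dots> = card K ^ length ws"
    by (rule card_lists_length_eq) simp
  finally show ?thesis .
qed

lemma exists_combination_rank_supp_superset:
  fixes ws :: "(nat \<Rightarrow> 'a::{finite,field}) list"
  assumes K: "is_subfield K" and "v \<in> span_list ws" and "w \<in> span_list ws"
    and "\<forall>x\<in>set ws. \<forall>j. x j \<in> K" and "card K ^ length ws \<le> card (UNIV :: 'a set)"
  obtains a b where "(a, b) \<noteq> (0, 0)"
    and "rank_supp K n v \<subseteq> rank_supp K n (\<lambda>i. a * v i + b * w i)"
    and "rank_supp K n w \<subseteq> rank_supp K n (\<lambda>i. a * v i + b * w i)"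
proof -
  let ?I = "{(dotp n v y, dotp n w y) | y. \<forall>j. y j \<in> K}"
  have "card ?I \<le> card (UNIV :: 'a set)"
    using card_dotp_pairs_le[OF assms(1-4)] assms(5) by (rule order.trans)
  from exists_line_meeting_only_at_origin[OF this] obtain a b where "(a, b) \<noteq> (0, 0)"
    and ab: "\<forall>(s, t)\<in>?I. a * s + b * t = 0 \<longrightarrow> s = 0 \<and> t = 0"
    by blast
  moreover have "dotp n v y = 0 \<and> dotp n w y = 0"
    if "\<forall>j. y j \<in> K" and "dotp n (\<lambda>i. a * v i + b * w i) y = 0" for y
  proof -
    have "(dotp n v y, dotp n w y) \<in> ?I"
      using that(1) by blast
    then show ?thesis
      using ab that(2) by (simp add: dotp_linear)
  qed
  ultimately show ?thesis
    using that rank_supp_mono[OF K] by (metis (no_types, lifting))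
qed

lemma vspan_subset_span_list: "S \<subseteq> span_list ws \<Longrightarrow> vspan K S \<subseteq> span_list ws"
  using vsubspace_span_list[of ws] by (intro vspan_subset) (auto simp: vsubspace_def)

lemma rank_supp_rows:
  fixes v :: "nat \<Rightarrow> 'a::{finite,field}"
  assumes K: "is_subfield K" and "v \<in> vecs n"
  obtains ws where "vspan K (set ws) = rank_supp K n v" and "v \<in> span_list ws"
    and "\<forall>x\<in>set ws. \<forall>j. x j \<in> K" and "set ws \<subseteq> vecs n"
    and "card K ^ length ws \<le> card (UNIV :: 'a set)"
proof -
  obtain u M where R: "supp_repr K n v u M"
    and supp: "rank_supp K n v = vspan K (M ` {..<length u})"
    using rank_supp_repr[OF K] by blast
  let ?ws = "map M [0..<length u]"
  have "vspan K (set ?ws) = rank_supp K n v"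
    unfolding supp by (simp add: atLeast0LessThan)
  moreover have "v \<in> span_list ?ws"
    using supp_repr_lcomb_rows[OF R assms(2)] span_listI[of u ?ws] by simp
  moreover have "\<forall>x\<in>set ?ws. \<forall>j. x j \<in> K" and "set ?ws \<subseteq> vecs n"
    using R unfolding supp_repr_def vecs_def by auto
  moreover have "card K ^ length ?ws \<le> card (UNIV :: 'a set)"
    using sindep_card_le[OF K] R unfolding supp_repr_def by simp
  ultimately show ?thesis
    using that by blast
qed

lemma galois_closed_hull_of_rank_supp:
  fixes v :: "nat \<Rightarrow> 'a::{finite,field}"
  assumes "prime CHAR('a)" and "q = CHAR('a) ^ e" and "q \<ge> 2"
    and "card (UNIV :: 'a set) = q ^ m" and "m > 0" and "v \<in> vecs n"
  obtains A where "vsubspace UNIV A" and "A \<subseteq> vecs n" and "galois_closed q A"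
    and "vdim UNIV A \<le> m" and "v \<in> A"
    and "\<And>u. u \<in> vecs n \<Longrightarrow> rank_supp (subfield_q q) n u \<subseteq> rank_supp (subfield_q q) n v \<Longrightarrow> u \<in> A"
proof -
  let ?K = "subfield_q q :: 'a set"
  have K: "is_subfield ?K"
    by (rule is_subfield_subfield_q[OF assms(1,2)])
  obtain ws where ws: "vspan ?K (set ws) = rank_supp ?K n v" "v \<in> span_list ws"
    "\<forall>x\<in>set ws. \<forall>j. x j \<in> ?K" "set ws \<subseteq> vecs n" "card ?K ^ length ws \<le> card (UNIV :: 'a set)"
    by (rule rank_supp_rows[OF K assms(6)])
  have in_hull: "u \<in> span_list ws"
    if u: "u \<in> vecs n" and u_supp: "rank_supp ?K n u \<subseteq> rank_supp ?K n v" for u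
  proof -
    obtain ws' where ws': "vspan ?K (set ws') = rank_supp ?K n u" and "u \<in> span_list ws'"
      and "\<forall>x\<in>set ws'. \<forall>j. x j \<in> ?K" and "set ws' \<subseteq> vecs n"
      and "card ?K ^ length ws' \<le> card (UNIV :: 'a set)"
      by (rule rank_supp_rows[OF K u])
    have "set ws' \<subseteq> vspan ?K (set ws)"
      using in_vspan[OF is_subfieldD(2)[OF K]] ws' ws(1) u_supp by blast
    also have "\<dots> \<subseteq> span_list ws"
      by (rule vspan_subset_span_list[OF set_subset_span_list])
    finally show ?thesis
      using span_list_subset[OF vsubspace_span_list] \<open>u \<in> span_list ws'\<close> by blast
  qed
  have "span_list ws \<subseteq> vecs n"
    by (rule span_list_subset[OF vsubspace_vecs ws(4)])
  moreover have "galois_closed q (span_list ws)"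
    by (rule galois_closed_span_list[OF assms(1,2) ws(3)])
  moreover have "length ws \<le> m"
  proof (rule power_le_imp_le_exp)
    show "q ^ length ws \<le> q ^ m"
      using ws(5) card_subfield_q[OF assms(3-5)] assms(4) by simp
  qed (use assms(3) in simp)
  then have "vdim UNIV (span_list ws) \<le> m"
    using vdim_le_length[OF vsubspace_span_list \<open>span_list ws \<subseteq> vecs n\<close> order_refl] by simp
  ultimately show ?thesis
    using that[OF vsubspace_span_list _ _ _ ws(2) in_hull] by blast
qed

lemma gen_rank_weight_attained:
  fixes C :: "(nat \<Rightarrow> 'a::{finite,field}) set"
  assumes "q > 0" and "is_code n k C" and "j \<le> k"
  obtains A where "vsubspace UNIV A" and "A \<subseteq> vecs n" and "galois_closed q A"
    and "vdim UNIV (A \<inter> C) \<ge> j" and "vdim UNIV A = gen_rank_weight q n C j"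
proof -
  have "galois_closed q (vecs n :: (nat \<Rightarrow> 'a) set)"
    unfolding galois_closed_def vecs_def using assms(1) by (simp add: zero_power)
  moreover have "vecs n \<inter> C = C" and "vdim UNIV C = k"
    using assms(2) unfolding is_code_def by auto
  ultimately have "\<exists>d A. vsubspace UNIV A \<and> A \<subseteq> vecs n \<and> galois_closed q A
      \<and> vdim UNIV (A \<inter> C) \<ge> j \<and> vdim UNIV A = d"
    using vsubspace_vecs assms(3) by (metis order_refl)
  then have "\<exists>A. vsubspace UNIV A \<and> A \<subseteq> vecs n \<and> galois_closed q A
      \<and> vdim UNIV (A \<inter> C) \<ge> j \<and> vdim UNIV A = gen_rank_weight q n C j"
    unfolding gen_rank_weight_def by (rule LeastI_ex)
  then show ?thesis
    using that by blast
qed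

lemma gen_rank_weight_le:
  assumes "vsubspace UNIV A" and "A \<subseteq> vecs n" and "galois_closed q A" and "vdim UNIV (A \<inter> C) \<ge> j"
  shows "gen_rank_weight q n C j \<le> vdim UNIV A"
  unfolding gen_rank_weight_def by (rule Least_le) (use assms in blast)

lemma not_minimal_codeword_if_rank_supp_contains_pair:
  assumes "lin_indep UNIV [v, w]" and "v \<in> C" and "w \<in> C"
    and "rank_supp (subfield_q q) n v \<subseteq> rank_supp (subfield_q q) n c"
    and "rank_supp (subfield_q q) n w \<subseteq> rank_supp (subfield_q q) n c"
  shows "\<not> minimal_codeword q n C c"
proof
  assume "minimal_codeword q n C c"
  then obtain a b where "v = (\<lambda>i. a * c i)" and "w = (\<lambda>i. b * c i)"
    using assms(2-5) unfolding minimal_codeword_def by blast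
  then have "(\<lambda>i. b * v i + (- a) * w i) = (\<lambda>i. 0)"
    by (simp add: algebra_simps)
  then have "a = 0"
    using assms(1)[unfolded lin_indep_pair_iff, rule_format, of b "- a"] by simp
  then have "v = (\<lambda>i. 0)"
    using \<open>v = (\<lambda>i. a * c i)\<close> by simp
  then show False
    using assms(1)[unfolded lin_indep_pair_iff, rule_format, of 1 0] by simp
qed

lemma not_minimal_code_if_rational_pair:
  fixes C :: "(nat \<Rightarrow> 'a::{finite,field}) set"
  assumes "prime CHAR('a)" and "q = CHAR('a) ^ e" and "q \<ge> 2"
    and "card (UNIV :: 'a set) = q ^ m" and "m > 0" and "is_code n k C"
    and "v \<in> C" and "w \<in> C" and indep: "lin_indep UNIV [v, w]"
    and "v \<in> span_list ws" and "w \<in> span_list ws"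
    and "\<forall>x\<in>set ws. \<forall>j. x j \<in> subfield_q q" and "length ws \<le> m"
  shows "\<not> minimal_code q n C"
proof
  assume "minimal_code q n C"
  let ?K = "subfield_q q :: 'a set"
  have "card ?K ^ length ws \<le> card (UNIV :: 'a set)"
    using card_subfield_q[OF assms(3-5)] assms(3,4,13) by (simp add: power_increasing)
  then obtain a b where "(a, b) \<noteq> (0, 0)"
    and supp: "rank_supp ?K n v \<subseteq> rank_supp ?K n (\<lambda>i. a * v i + b * w i)"
      "rank_supp ?K n w \<subseteq> rank_supp ?K n (\<lambda>i. a * v i + b * w i)"
    by (rule exists_combination_rank_supp_superset[OF is_subfield_subfield_q[OF assms(1,2)]
        assms(10-12)])
  have "(\<lambda>i. a * v i + b * w i) \<in> C"
    using assms(6-8) unfolding is_code_def by (intro vsubspace_add vsubspace_scale) auto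
  moreover have "(\<lambda>i. a * v i + b * w i) \<noteq> (\<lambda>i. 0)"
    using indep \<open>(a, b) \<noteq> (0, 0)\<close> unfolding lin_indep_pair_iff by blast
  ultimately have "minimal_codeword q n C (\<lambda>i. a * v i + b * w i)"
    using \<open>minimal_code q n C\<close> unfolding minimal_code_def by blast
  then show False
    using not_minimal_codeword_if_rank_supp_contains_pair[OF indep assms(7,8) supp] by blast
qed

lemma gen_rank_weight_2_gt_if_minimal_code:
  fixes C :: "(nat \<Rightarrow> 'a::{finite,field}) set"
  assumes "prime CHAR('a)" and "q = CHAR('a) ^ e" and "q \<ge> 2"
    and "card (UNIV :: 'a set) = q ^ m" and "m > 0"
    and "is_code n k C" and "k \<ge> 2" and "minimal_code q n C"
  shows "m < gen_rank_weight q n C 2"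
proof (rule ccontr)
  assume "\<not> m < gen_rank_weight q n C 2"
  have "q > 0"
    using assms(3) by simp
  obtain A where A: "vsubspace UNIV A" "A \<subseteq> vecs n" "galois_closed q A" "vdim UNIV (A \<inter> C) \<ge> 2"
    and "vdim UNIV A = gen_rank_weight q n C 2"
    by (rule gen_rank_weight_attained[OF \<open>q > 0\<close> assms(6,7)])
  obtain ws where "lin_indep UNIV ws" and ws_A: "span_list ws = A"
    and ws_fixed: "\<forall>w\<in>set ws. \<forall>i. w i ^ q = w i"
    by (rule galois_closed_basis[OF \<open>q > 0\<close> A(1-3)])
  have "length ws \<le> m"
    using lin_indep_length_le_vdim[OF A(1,2) \<open>lin_indep UNIV ws\<close>] set_subset_span_list[of ws]
      ws_A \<open>vdim UNIV A = _\<close> \<open>\<not> m < _\<close> by simp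
  have C: "vsubspace UNIV C" "C \<subseteq> vecs n"
    using assms(6) unfolding is_code_def by auto
  obtain v w where "v \<in> A \<inter> C" and "w \<in> A \<inter> C" and "lin_indep UNIV [v, w]"
    using lin_indep_pair_if_vdim_ge_2[OF vsubspace_Int[OF A(1) C(1)] _ A(4)] A(2) by blast
  then have "\<not> minimal_code q n C"
    using not_minimal_code_if_rational_pair[OF assms(1-6), of v w ws] ws_A ws_fixed \<open>length ws \<le> m\<close>
    unfolding subfield_q_def by simp
  with assms(8) show False
    by contradiction
qed

lemma gen_rank_weight_2_le_if_rank_supp_subset:
  fixes C :: "(nat \<Rightarrow> 'a::{finite,field}) set"
  assumes "prime CHAR('a)" and "q = CHAR('a) ^ e" and "q \<ge> 2"
    and "card (UNIV :: 'a set) = q ^ m" and "m > 0" and "is_code n k C"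
    and "v \<in> C" and "u \<in> C" and "lin_indep UNIV [v, u]"
    and "rank_supp (subfield_q q) n u \<subseteq> rank_supp (subfield_q q) n v"
  shows "gen_rank_weight q n C 2 \<le> m"
proof -
  have C: "vsubspace UNIV C" "C \<subseteq> vecs n"
    using assms(6) unfolding is_code_def by auto
  then have "v \<in> vecs n" and "u \<in> vecs n"
    using assms(7,8) by blast+
  obtain A where A: "vsubspace UNIV A" "A \<subseteq> vecs n" "galois_closed q A" "vdim UNIV A \<le> m"
    and "v \<in> A" and hull: "\<And>w. w \<in> vecs n \<Longrightarrow>
      rank_supp (subfield_q q) n w \<subseteq> rank_supp (subfield_q q) n v \<Longrightarrow> w \<in> A"
    using galois_closed_hull_of_rank_supp[OF assms(1-5) \<open>v \<in> vecs n\<close>] by metis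
  have "u \<in> A"
    by (rule hull[OF \<open>u \<in> vecs n\<close> assms(10)])
  have "length [v, u] \<le> vdim UNIV (A \<inter> C)"
    using \<open>v \<in> A\<close> \<open>u \<in> A\<close> assms(7,8) A(2)
    by (intro lin_indep_length_le_vdim[OF vsubspace_Int[OF A(1) C(1)] _ assms(9)]) auto
  then have "gen_rank_weight q n C 2 \<le> vdim UNIV A"
    by (intro gen_rank_weight_le[OF A(1-3)]) simp
  with A(4) show ?thesis
    by simp
qed

lemma minimal_code_if_gen_rank_weight_2_gt:
  fixes C :: "(nat \<Rightarrow> 'a::{finite,field}) set"
  assumes "prime CHAR('a)" and "q = CHAR('a) ^ e" and "q \<ge> 2"
    and "card (UNIV :: 'a set) = q ^ m" and "m > 0" and "is_code n k C"
    and "m < gen_rank_weight q n C 2"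
  shows "minimal_code q n C"
  unfolding minimal_code_def minimal_codeword_def
proof (intro ballI impI conjI iffI)
  let ?K = "subfield_q q :: 'a set"
  fix v u
  assume "v \<in> C" and "v \<noteq> (\<lambda>i. 0)" and "u \<in> C"
  show "v \<in> C" and "v \<noteq> (\<lambda>i. 0)"
    by fact+
  show "\<exists>c. u = (\<lambda>i. c * v i)" if "rank_supp ?K n u \<subseteq> rank_supp ?K n v"
  proof (rule ccontr)
    assume "\<nexists>c. u = (\<lambda>i. c * v i)"
    then have "lin_indep UNIV [v, u]"
      by (rule lin_indep_pair_if_not_multiple[OF \<open>v \<noteq> (\<lambda>i. 0)\<close>])
    then have "gen_rank_weight q n C 2 \<le> m"
      by (rule gen_rank_weight_2_le_if_rank_supp_subset[OF assms(1-6) \<open>v \<in> C\<close> \<open>u \<in> C\<close> _ that])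
    with assms(7) show False
      by simp
  qed
  show "rank_supp ?K n u \<subseteq> rank_supp ?K n v" if multiple: "\<exists>c. u = (\<lambda>i. c * v i)"
  proof -
    obtain c where "u = (\<lambda>i. c * v i)"
      using multiple by blast
    then show ?thesis
      by (intro rank_supp_mono[OF is_subfield_subfield_q[OF assms(1,2)]]) (simp add: dotp_scale)
  qed
qed

theorem theorem3p4:
  fixes C :: "(nat \<Rightarrow> 'a::{finite,field}) set" and q m n k :: nat
  assumes "\<exists>p e. prime p \<and> e > 0 \<and> q = p ^ e"
    and "card (UNIV :: 'a set) = q ^ m" and "m > 0" and "n > 0" and "k \<ge> 2"
    and "is_code n k C"
    and "nondegenerate q n k C"
  shows "minimal_code q n C \<longleftrightarrow> gen_rank_weight q n C 2 \<ge> m + 1"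
proof -
  obtain p e where p: "prime p" "e > 0" "q = p ^ e"
    using assms(1) by blast
  note field_order = prime_power_field_order[OF p assms(2)]
  show ?thesis
  proof
    assume "minimal_code q n C"
    then show "gen_rank_weight q n C 2 \<ge> m + 1"
      using gen_rank_weight_2_gt_if_minimal_code[OF field_order assms(2,3,6,5)] by simp
  next
    assume "gen_rank_weight q n C 2 \<ge> m + 1"
    then show "minimal_code q n C"
      using minimal_code_if_gen_rank_weight_2_gt[OF field_order assms(2,3,6)] by simp
  qed
qed

end
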